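(* IPR with $\rho=4$ terminates after at most $O(m^2)$ iterations of its while loop, where $m$ is the number of machines.
   Context: Jobs $j\in[n]$ have processing times $p_j\ge0$; for a bag $B$, $p(B)=\sum_{j\in B}p_j$. There are $m$ machines with predicted speeds $\hat s_1\ge\dots\ge\hat s_m$; $opt(\mathbf p,\hat{\mathbf s})$ is the minimum makespan $\max_i(\text{load of } i)/\hat s_i$ of assigning jobs to machines with speeds $\hat{\mathbf s}$. Algorithm IPR. Input: $\hat{\mathbf s}$, $\mathbf p$, $\alpha\in(0,1)$, accuracy $\epsilon\in(0,1)$, $\rho\ge1$. (1) Compute a partition $B_1,\dots,B_m$ with $p(B_1)\ge\dots\ge p(B_m)$ such that putting $B_i$ on machine $i$ has makespan at most $(1+\epsilon)opt(\mathbf p,\hat{\mathbf s})$ under speeds $\hat{\mathbf s}$. (2) Set $\overline{OPT}_C=\max_i p(B_i)/\hat s_i$ and tentative assignment $\mathcal M_i=\{B_i\}$. (3) While $\max\{p(B): B\in\cup_i\mathcal M_i, |B|\ge2\}>\rho\min\{p(B):B\in\cup_i\mathcal M_i\}$ (each execution of the loop body is an iteration): compute $\mathcal M'=$ LPT-Rebalance$(\mathcal M)$; if $\max_i\sum_{B\in\mathcal M'_i}p(B)/\hat s_i>(1+\alpha)\overline{OPT}_C$ return the current bags $\cup_i\mathcal M_i$; else $\mathcal M\leftarrow\mathcal M'$. (4) Return the bags $\cup_i\mathcal M_i$. LPT-Rebalance: let $B_{\min}$ be a bag of minimum $p(B)$ over all bags, $\mathcal M_{\min}$ its collection, $\mathcal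 M_{\max}$ a collection containing a bag of maximum $p(B)$ among bags with at least two jobs. Move $B_{\min}$ into $\mathcal M_{\max}$, let $\ell=|\mathcal M_{\max}|$, pool its jobs and redistribute them into $\ell$ new bags by LPT (jobs in non-increasing processing time, each into a currently least-loaded bag); these form the new $\mathcal M_{\max}$. *)

theory Defs
  imports Complex_Main "HOL-Library.FuncSet"
begin

(* Jobs are 0..<n with processing times p j; machines are 0..<m with predicted speeds s i.
   A bag is a finite set of jobs; a tentative assignment M maps machine i to the
   list (collection) of bags M i. *)

definition pb :: "(nat \<Rightarrow> real) \<Rightarrow> nat set \<Rightarrow> real" where
  "pb p B = (\<Sum>j\<in>B. p j)"

definition opt :: "nat \<Rightarrow> (nat \<Rightarrow> real) \<Rightarrow> nat \<Rightarrow> (nat \<Rightarrow> real) \<Rightarrow> real" where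
  "opt n p m s = Min ((\<lambda>f. Max ((\<lambda>i. (\<Sum>j\<in>{j\<in>{..<n}. f j = i}. p j) / s i) ` {..<m}))
                        ` ({..<n} \<rightarrow>\<^sub>E {..<m}))"

definition ipr_partition ::
  "nat \<Rightarrow> (nat \<Rightarrow> real) \<Rightarrow> nat \<Rightarrow> (nat \<Rightarrow> real) \<Rightarrow> real \<Rightarrow> (nat \<Rightarrow> nat set) \<Rightarrow> bool" where
  "ipr_partition n p m s eps B \<longleftrightarrow>
     (\<forall>i<m. \<forall>i'<m. i \<noteq> i' \<longrightarrow> B i \<inter> B i' = {}) \<and>
     (\<Union>i<m. B i) = {..<n} \<and>
     (\<forall>i i'. i \<le> i' \<and> i' < m \<longrightarrow> pb p (B i') \<le> pb p (B i)) \<and>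
     Max ((\<lambda>i. pb p (B i) / s i) ` {..<m}) \<le> (1 + eps) * opt n p m s"

definition opt_C :: "(nat \<Rightarrow> real) \<Rightarrow> nat \<Rightarrow> (nat \<Rightarrow> real) \<Rightarrow> (nat \<Rightarrow> nat set) \<Rightarrow> real" where
  "opt_C p m s B = Max ((\<lambda>i. pb p (B i) / s i) ` {..<m})"

definition all_bags :: "nat \<Rightarrow> (nat \<Rightarrow> nat set list) \<Rightarrow> nat set list" where
  "all_bags m M = concat (map M [0..<m])"

definition loop_cond :: "real \<Rightarrow> (nat \<Rightarrow> real) \<Rightarrow> nat \<Rightarrow> (nat \<Rightarrow> nat set list) \<Rightarrow> bool" where
  "loop_cond rho p m M \<longleftrightarrow>
     (\<exists>B\<in>set (all_bags m M). 2 \<le> card B \<and> pb p B > rho * Min (pb p ` set (all_bags m M)))"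

definition makespan :: "(nat \<Rightarrow> real) \<Rightarrow> (nat \<Rightarrow> real) \<Rightarrow> nat \<Rightarrow> (nat \<Rightarrow> nat set list) \<Rightarrow> real" where
  "makespan p s m M = Max ((\<lambda>i. sum_list (map (pb p) (M i)) / s i) ` {..<m})"

inductive lpt_assign :: "(nat \<Rightarrow> real) \<Rightarrow> nat list \<Rightarrow> nat set list \<Rightarrow> nat set list \<Rightarrow> bool"
  for p where
  Nil: "lpt_assign p [] bs bs"
| Cons: "k < length bs \<Longrightarrow> (\<forall>k'<length bs. pb p (bs ! k) \<le> pb p (bs ! k')) \<Longrightarrow>
         lpt_assign p js (bs[k := insert j (bs ! k)]) res \<Longrightarrow> lpt_assign p (j # js) bs res"

definition lpt :: "(nat \<Rightarrow> real) \<Rightarrow> nat set \<Rightarrow> nat \<Rightarrow> nat set list \<Rightarrow> bool" where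
  "lpt p J l res \<longleftrightarrow> (\<exists>js. distinct js \<and> set js = J \<and> sorted_wrt (\<lambda>a b. p b \<le> p a) js \<and>
                          lpt_assign p js (replicate l {}) res)"

(* LPT-Rebalance (relation: M' is a possible outcome on M, allowing all tie-breaks) *)
definition lpt_rebalance :: "(nat \<Rightarrow> real) \<Rightarrow> nat \<Rightarrow> (nat \<Rightarrow> nat set list) \<Rightarrow> (nat \<Rightarrow> nat set list) \<Rightarrow> bool" where
  "lpt_rebalance p m M M' \<longleftrightarrow>
    (\<exists>imin a imax res.
       imin < m \<and> a < length (M imin) \<and>
       (\<forall>B\<in>set (all_bags m M). pb p (M imin ! a) \<le> pb p B) \<and>
       imax < m \<and>
       (\<exists>Bx\<in>set (M imax). 2 \<le> card Bx \<and>
           (\<forall>B\<in>set (all_bags m M). 2 \<le> card B \<longrightarrow> pb p B \<le> pb p Bx)) \<and>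
       (let M1 = M(imin := take a (M imin) @ drop (Suc a) (M imin));
            C = M1 imax @ [M imin ! a]
        in lpt p (\<Union> (set C)) (length C) res \<and> M' = M1(imax := res)))"

definition ipr_runs_iterations ::
  "real \<Rightarrow> real \<Rightarrow> (nat \<Rightarrow> real) \<Rightarrow> (nat \<Rightarrow> real) \<Rightarrow> nat \<Rightarrow> (nat \<Rightarrow> nat set) \<Rightarrow> nat \<Rightarrow> bool" where
  "ipr_runs_iterations rho alpha p s m B k \<longleftrightarrow>
    (\<exists>M :: nat \<Rightarrow> nat \<Rightarrow> nat set list.
       M 0 = (\<lambda>i. [B i]) \<and>
       (\<forall>t<k. loop_cond rho p m (M t) \<and> lpt_rebalance p m (M t) (M (Suc t))) \<and>
       (\<forall>t. Suc t < k \<longrightarrow> makespan p s m (M (Suc t)) \<le> (1 + alpha) * opt_C p m s B))"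

end

theory Submission
  imports Defs "HOL-Library.Multiset"
begin

text \<open>
  Let \<open>\<mu>\<close> be the least load of a bag. Throughout the loop the bags partition the jobs into
  exactly \<open>m\<close> bags, and on every machine they are 2-balanced: for some \<open>F\<close>, every bag has load
  at least \<open>F\<close> and every multi-job bag has load at most \<open>2 F\<close>. While the loop condition holds,
  the machine receiving the minimum bag \<open>b\<close> owns a multi-job bag of load above \<open>4 \<mu>\<close>, so by
  2-balance all its bags have load above \<open>2 \<mu>\<close>. LPT applied to these bags together with \<open>b\<close>
  yields bags of load at least \<open>\<mu>\<close>, so \<open>\<mu>\<close> never decreases; and LPT output is again
  2-balanced.

  Call a machine settled if its multi-job bags have load at most \<open>4 \<mu>\<close>. The potential summing,
  over all machines, the number of bags of a settled machine and \<open>m\<close> for an unsettled one is at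
  most \<open>m\<^sup>2\<close> and drops in every iteration: the machine that lost \<open>b\<close> has one bag fewer
  and becomes settled (its multi-job bags weigh at most \<open>2 F \<le> 2 \<mu>\<close>), settled machines stay
  settled because \<open>\<mu>\<close> does not decrease, and the receiving machine was unsettled before.
\<close>

section \<open>Pairwise disjoint multisets of sets\<close>

text \<open>Disjointness counts multiplicities: a nonempty set may not occur twice, the empty set may.\<close>

definition disjoint_mset :: "'a set multiset \<Rightarrow> bool" where
  "disjoint_mset A \<longleftrightarrow> (\<forall>x. size {#X \<in># A. x \<in> X#} \<le> 1)"

lemma size_filter_mset_pos_iff: "0 < size (filter_mset P A) \<longleftrightarrow> (\<exists>X\<in>#A. P X)"
  by (metis filter_mset_eq_mempty_iff size_eq_0_iff_empty zero_less_iff_neq_zero)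

lemma disjoint_mset_union:
  "disjoint_mset (A + B) \<longleftrightarrow>
     disjoint_mset A \<and> disjoint_mset B \<and> (\<forall>X\<in>#A. \<forall>Y\<in>#B. X \<inter> Y = {})"
proof -
  have "a + b \<le> 1 \<longleftrightarrow> a \<le> 1 \<and> b \<le> 1 \<and> \<not> (0 < a \<and> 0 < b)" for a b :: nat
    by linarith
  then have "size {#X \<in># A + B. x \<in> X#} \<le> 1 \<longleftrightarrow>
        size {#X \<in># A. x \<in> X#} \<le> 1 \<and> size {#X \<in># B. x \<in> X#} \<le> 1 \<and>
        \<not> ((\<exists>X\<in>#A. x \<in> X) \<and> (\<exists>Y\<in>#B. x \<in> Y))" for x
    by (simp only: filter_union_mset size_union size_filter_mset_pos_iff)
  then show ?thesis
    unfolding disjoint_mset_def disjoint_iff by auto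
qed

lemma disjoint_mset_add_mset:
  "disjoint_mset (add_mset X A) \<longleftrightarrow> disjoint_mset A \<and> (\<forall>Y\<in>#A. X \<inter> Y = {})"
  using disjoint_mset_union[of "{#X#}" A] by (simp add: disjoint_mset_def)

lemma disjoint_mset_replace:
  assumes "disjoint_mset (R + A)" "disjoint_mset B" "\<Union>(set_mset B) \<subseteq> \<Union>(set_mset A)"
  shows "disjoint_mset (R + B)"
  using assms unfolding disjoint_mset_union by blast

lemma sum_list_sum_disjoint:
  assumes "disjoint_mset (mset Xs)" "\<forall>X\<in>set Xs. finite X"
  shows "(\<Sum>X\<leftarrow>Xs. sum f X) = sum f (\<Union>(set Xs))"
  using assms
proof (induction Xs)
  case (Cons X Xs)
  then have "X \<inter> \<Union>(set Xs) = {}"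
    by (auto simp: disjoint_mset_add_mset)
  with Cons show ?case
    by (simp add: disjoint_mset_add_mset sum.union_disjoint)
qed simp

section \<open>LPT placement\<close>

lemma pb_insert_le:
  assumes "finite X" "0 \<le> p j"
  shows "pb p (insert j X) \<le> p j + pb p X"
  using assms by (simp add: pb_def sum.insert_if)

lemma pb_le_pb_insert:
  assumes "finite X" "0 \<le> p j"
  shows "pb p X \<le> pb p (insert j X)"
  using assms by (simp add: pb_def sum.insert_if)

lemma member_le_pb:
  assumes "finite X" "\<forall>x\<in>X. 0 \<le> p x" "j \<in> X"
  shows "p j \<le> pb p X"
  unfolding pb_def using assms by (intro member_le_sum) auto

definition lpt_balanced :: "(nat \<Rightarrow> real) \<Rightarrow> nat set list \<Rightarrow> bool" where
  "lpt_balanced p bs \<longleftrightarrow> (\<forall>X\<in>set bs. 2 \<le> card X \<longrightarrow>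
      (\<forall>Y\<in>set bs. pb p X \<le> 2 * pb p Y \<and> (\<forall>j\<in>X. p j \<le> pb p Y)))"

lemma lpt_balanced_replicate_empty: "lpt_balanced p (replicate l {})"
  by (simp add: lpt_balanced_def)

lemma lpt_balanced_insert_least_loaded:
  assumes bal: "lpt_balanced p bs" and k: "k < length bs"
    and least: "\<forall>k'<length bs. pb p (bs ! k) \<le> pb p (bs ! k')"
    and fin: "\<forall>X\<in>set bs. finite X" and nonneg: "\<forall>X\<in>set bs. \<forall>x\<in>X. 0 \<le> p x"
    and small: "\<forall>x\<in>bs ! k. p j \<le> p x" and pj: "0 \<le> p j"
  shows "lpt_balanced p (bs[k := insert j (bs ! k)])"
proof -
  define X where "X = bs ! k"
  have X: "X \<in> set bs" and finX: "finite X"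
    using k fin by (auto simp: X_def)
  have nonnegX: "\<forall>x\<in>X. 0 \<le> p x"
    using X nonneg by blast
  have X_least: "pb p X \<le> pb p Y" if "Y \<in> set bs" for Y
    using that least by (auto simp: X_def in_set_conv_nth)
  have new_bags: "set (bs[k := insert j X]) \<subseteq> insert (insert j X) (set bs)"
    by (rule set_update_subset_insert)
  have X_least': "pb p X \<le> pb p Y" if "Y \<in> set (bs[k := insert j X])" for Y
    using that new_bags X_least pb_le_pb_insert[of X p j] finX pj by fastforce
  have multi_bound: "pb p Z \<le> 2 * pb p X \<and> (\<forall>i\<in>Z. p i \<le> pb p X)"
    if Z: "Z \<in> set (bs[k := insert j X])" "2 \<le> card Z" for Z
  proof (cases "Z = insert j X")
    case True
    with Z(2) have "X \<noteq> {}"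
      by auto
    then obtain x where "x \<in> X"
      by blast
    then have pj_le: "p j \<le> pb p X"
      using small member_le_pb[OF finX nonnegX] X_def by fastforce
    then have "pb p (insert j X) \<le> 2 * pb p X"
      using pb_insert_le[of X p j, OF finX pj] by linarith
    then have "pb p Z \<le> 2 * pb p X"
      using True by simp
    moreover have "\<forall>i\<in>Z. p i \<le> pb p X"
      using True pj_le member_le_pb[OF finX nonnegX] by auto
    ultimately show ?thesis
      by blast
  next
    case False
    then have "Z \<in> set bs"
      using Z(1) new_bags by blast
    then show ?thesis
      using bal Z(2) X unfolding lpt_balanced_def by blast
  qed
  show ?thesis
    unfolding lpt_balanced_def X_def[symmetric]
    using multi_bound X_least' by (meson dual_order.trans mult_left_mono zero_le_numeral)
qed

lemma Union_set_update_insert: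
  assumes "k < length bs"
  shows "\<Union>(set (bs[k := insert j (bs ! k)])) = insert j (\<Union>(set bs))"
proof -
  have "set bs \<subseteq> insert (bs ! k) (set (bs[k := insert j (bs ! k)]))"
  proof
    fix X assume "X \<in> set bs"
    then obtain i where "i < length bs" "X = bs ! i"
      by (auto simp: in_set_conv_nth)
    then show "X \<in> insert (bs ! k) (set (bs[k := insert j (bs ! k)]))"
      by (metis insertCI length_list_update nth_list_update_neq nth_mem)
  qed
  moreover have "insert j (bs ! k) \<in> set (bs[k := insert j (bs ! k)])"
    using assms by (simp add: set_update_memI)
  ultimately show ?thesis
    using set_update_subset_insert[of bs k "insert j (bs ! k)"] assms by auto
qed

lemma lpt_assign_length: "lpt_assign p js bs res \<Longrightarrow> length res = length bs"
  by (induction rule: lpt_assign.induct) auto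

lemma lpt_assign_Union: "lpt_assign p js bs res \<Longrightarrow> \<Union>(set res) = \<Union>(set bs) \<union> set js"
  by (induction rule: lpt_assign.induct) (auto simp: Union_set_update_insert)

lemma lpt_assign_disjoint:
  "lpt_assign p js bs res \<Longrightarrow> disjoint_mset (mset bs) \<Longrightarrow> distinct js \<Longrightarrow>
   set js \<inter> \<Union>(set bs) = {} \<Longrightarrow> disjoint_mset (mset res)"
proof (induction rule: lpt_assign.induct)
  case (Cons k bs js j res)
  obtain D where D: "mset bs = add_mset (bs ! k) D"
    "mset (bs[k := insert j (bs ! k)]) = add_mset (insert j (bs ! k)) D"
    using Cons.hyps(1) by (metis insert_DiffM mset_update nth_mem_mset)
  have "j \<notin> Y" if "Y \<in># D" for Y
  proof -
    have "Y \<in># mset bs"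
      using that D(1) by simp
    then have "Y \<in> set bs"
      by simp
    then show ?thesis
      using Cons.prems(3) by auto
  qed
  then have "disjoint_mset (mset (bs[k := insert j (bs ! k)]))"
    using Cons.prems(1) D by (auto simp: disjoint_mset_add_mset)
  moreover have "set js \<inter> \<Union>(set (bs[k := insert j (bs ! k)])) = {}"
    using Cons.prems(2,3) by (auto simp: Union_set_update_insert[OF Cons.hyps(1)])
  ultimately show ?case
    using Cons.IH Cons.prems(2) by simp
qed simp

lemma lpt_balanced_lpt_assign:
  "lpt_assign p js bs res \<Longrightarrow> lpt_balanced p bs \<Longrightarrow> \<forall>X\<in>set bs. finite X \<Longrightarrow>
   \<forall>X\<in>set bs. \<forall>x\<in>X. 0 \<le> p x \<Longrightarrow> \<forall>j\<in>set js. 0 \<le> p j \<Longrightarrow>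
   sorted_wrt (\<lambda>a b. p b \<le> p a) js \<Longrightarrow> \<forall>X\<in>set bs. \<forall>x\<in>X. \<forall>y\<in>set js. p y \<le> p x \<Longrightarrow>
   lpt_balanced p res"
proof (induction rule: lpt_assign.induct)
  case (Cons k bs js j res)
  define bs' where "bs' = bs[k := insert j (bs ! k)]"
  have new_bags: "X \<in> set bs'  \<Longrightarrow> X = insert j (bs ! k) \<or> X \<in> set bs" for X
    using set_update_subset_insert[of bs k] unfolding bs'_def by blast
  have "lpt_balanced p bs'"
    unfolding bs'_def using Cons by (intro lpt_balanced_insert_least_loaded) auto
  moreover have "\<forall>X\<in>set bs'. finite X"
    using new_bags Cons.hyps(1) Cons.prems(2) by fastforce
  moreover have "\<forall>X\<in>set bs'. \<forall>x\<in>X. 0 \<le> p x"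
    using new_bags Cons.hyps(1) Cons.prems(3,4) by fastforce
  moreover have "\<forall>X\<in>set bs'. \<forall>x\<in>X. \<forall>y\<in>set js. p y \<le> p x"
    using new_bags Cons.hyps(1) Cons.prems(5,6) by fastforce
  ultimately show ?case
    using Cons.IH Cons.prems(4,5) unfolding bs'_def by simp
qed

lemma lpt_length: "lpt p J l res \<Longrightarrow> length res = l"
  unfolding lpt_def using lpt_assign_length by fastforce

lemma lpt_Union: "lpt p J l res \<Longrightarrow> \<Union>(set res) = J"
  unfolding lpt_def using lpt_assign_Union by fastforce

lemma lpt_finite: "lpt p J l res \<Longrightarrow> X \<in> set res \<Longrightarrow> finite X"
  using lpt_Union unfolding lpt_def by (metis Union_upper finite_set finite_subset)

lemma lpt_disjoint:
  assumes "lpt p J l res"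
  shows "disjoint_mset (mset res)"
proof -
  have "disjoint_mset (mset (replicate l ({} :: nat set)))"
    unfolding disjoint_mset_def by (induction l) auto
  then show ?thesis
    using assms lpt_assign_disjoint unfolding lpt_def by fastforce
qed

lemma lpt_balanced_lpt: "lpt p J l res \<Longrightarrow> \<forall>j\<in>J. 0 \<le> p j \<Longrightarrow> lpt_balanced p res"
  unfolding lpt_def using lpt_balanced_lpt_assign lpt_balanced_replicate_empty by fastforce

lemma min_le_sum_capped:
  assumes "finite Y" "\<forall>j\<in>Y. 0 \<le> p j" "0 \<le> c"
  shows "min (pb p Y) c \<le> (\<Sum>j\<in>Y. if p j \<le> F then p j else c)"
proof (cases "\<forall>j\<in>Y. p j \<le> F")
  case True
  then show ?thesis
    unfolding pb_def by simp
next
  case False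
  then obtain j where "j \<in> Y" "\<not> p j \<le> F"
    by blast
  then have "c \<le> (\<Sum>j\<in>Y. if p j \<le> F then p j else c)"
    using assms member_le_sum[of j Y "\<lambda>j. if p j \<le> F then p j else c"] by auto
  then show ?thesis
    by linarith
qed

lemma sum_capped_le_if_lpt_balanced:
  assumes bal: "lpt_balanced p bs" and X0: "X0 \<in> set bs" and Y: "Y \<in> set bs" "finite Y"
    and c: "2 * pb p X0 \<le> c" "0 \<le> c"
  shows "(\<Sum>j\<in>Y. if p j \<le> pb p X0 then p j else c) \<le> c"
proof -
  consider "2 \<le> card Y" | "card Y = 1" | "card Y = 0"
    by linarith
  then show ?thesis
  proof cases
    case 1
    then have "pb p Y \<le> 2 * pb p X0" "\<forall>j\<in>Y. p j \<le> pb p X0"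
      using bal X0 Y unfolding lpt_balanced_def by auto
    then show ?thesis
      using c unfolding pb_def by simp
  next
    case 2
    then show ?thesis
      using c by (auto simp: card_1_singleton_iff)
  next
    case 3
    then show ?thesis
      using c Y by simp
  qed
qed

lemma lpt_load_lower_bound:
  assumes lpt: "lpt p (\<Union>(set (bs @ [b]))) (length (bs @ [b])) res"
    and disj: "disjoint_mset (mset (bs @ [b]))" and fin: "\<forall>Y\<in>set (bs @ [b]). finite Y"
    and nonneg: "\<forall>j\<in>\<Union>(set (bs @ [b])). 0 \<le> p j"
    and b: "\<mu> \<le> pb p b" and bs: "\<forall>Y\<in>set bs. 2 * \<mu> \<le> pb p Y"
    and X: "X \<in> set res"
  shows "\<mu> \<le> pb p X"
proof (rule ccontr)
  assume X_small: "\<not> \<mu> \<le> pb p X"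
  define F where "F = Min (pb p ` set res)"
  have "F \<in> pb p ` set res"
    unfolding F_def using X by (intro Min_in) auto
  then obtain X0 where X0: "X0 \<in> set res" "pb p X0 = F"
    by auto
  have fin_res: "\<forall>Y\<in>set res. finite Y"
    using lpt lpt_finite by blast
  have nonneg_res: "\<forall>Y\<in>set res. \<forall>j\<in>Y. 0 \<le> p j"
    using lpt_Union[OF lpt] nonneg by blast
  have "F \<le> pb p X"
    using X unfolding F_def by simp
  with X_small have F_less: "F < \<mu>"
    by linarith
  have F_nonneg: "0 \<le> F"
    unfolding X0(2)[symmetric] pb_def using X0(1) nonneg_res by (simp add: sum_nonneg)
  \<comment> \<open>Cap the jobs heavier than \<open>F\<close> at weight \<open>2 * \<mu>\<close>. In the LPT result such jobs are alone
    in their bags, so every result bag weighs at most \<open>2 * \<mu>\<close> and \<open>X0\<close> at most \<open>F\<close>, while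
    every pooled bag weighs at least \<open>min (pb p Y) (2 * \<mu>)\<close>; the total weights then force
    \<open>\<mu> \<le> F\<close>.\<close>
  define q where "q j = (if p j \<le> F then p j else 2 * \<mu>)" for j
  have "(\<Sum>Y\<leftarrow>res. sum q Y) = sum q (\<Union>(set (bs @ [b])))"
    and "(\<Sum>Y\<leftarrow>bs @ [b]. sum q Y) = sum q (\<Union>(set (bs @ [b])))"
    using sum_list_sum_disjoint[of res q] sum_list_sum_disjoint[of "bs @ [b]" q]
      lpt_disjoint[OF lpt] lpt_Union[OF lpt] disj fin fin_res
    by simp_all
  then have same_total: "(\<Sum>Y\<leftarrow>res. sum q Y) = (\<Sum>Y\<leftarrow>bs @ [b]. sum q Y)"
    by simp
  have "\<forall>j\<in>X0. p j \<le> F"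
    using member_le_pb X0 fin_res nonneg_res by metis
  then have q_X0: "sum q X0 \<le> F"
    using X0(2) unfolding q_def pb_def by simp
  have q_res: "sum q Y \<le> 2 * \<mu>" if "Y \<in> set res" for Y
    using sum_capped_le_if_lpt_balanced[OF lpt_balanced_lpt[OF lpt nonneg] X0(1) that]
      fin_res that X0(2) F_less F_nonneg
    unfolding q_def by simp
  have q_pool: "min (pb p Y) (2 * \<mu>) \<le> sum q Y" if "Y \<in> set (bs @ [b])" for Y
    using min_le_sum_capped[of Y p "2 * \<mu>" F] that fin nonneg F_less F_nonneg
    unfolding q_def by auto
  have "(\<Sum>Y\<leftarrow>res. sum q Y) = sum q X0 + (\<Sum>Y\<leftarrow>remove1 X0 res. sum q Y)"
    using X0(1) by (rule sum_list_map_remove1)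
  also have "\<dots> \<le> F + (\<Sum>Y\<leftarrow>remove1 X0 res. 2 * \<mu>)"
    using q_X0 q_res sum_list_mono[of "remove1 X0 res"] by (meson add_mono notin_set_remove1)
  also have "\<dots> = F + of_nat (length bs) * (2 * \<mu>)"
    using X0(1) lpt_length[OF lpt] by (simp add: sum_list_triv length_remove1)
  finally have upper: "(\<Sum>Y\<leftarrow>res. sum q Y) \<le> F + of_nat (length bs) * (2 * \<mu>)" .
  have "\<mu> \<le> sum q b"
    using q_pool[of b] b F_less F_nonneg by simp
  moreover have "(\<Sum>Y\<leftarrow>bs. 2 * \<mu>) \<le> (\<Sum>Y\<leftarrow>bs. sum q Y)"
    using q_pool bs by (intro sum_list_mono) fastforce
  ultimately have "\<mu> + of_nat (length bs) * (2 * \<mu>) \<le> (\<Sum>Y\<leftarrow>bs @ [b]. sum q Y)"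
    by (simp add: sum_list_triv)
  then show False
    using upper same_total F_less by linarith
qed

section \<open>Iterations of IPR\<close>

definition bags_mset :: "nat \<Rightarrow> (nat \<Rightarrow> nat set list) \<Rightarrow> nat set multiset" where
  "bags_mset m M = (\<Sum>i<m. mset (M i))"

lemma mset_all_bags: "mset (all_bags m M) = bags_mset m M"
  unfolding all_bags_def bags_mset_def mset_concat
  by (simp add: comp_def interv_sum_list_conv_sum_set_nat atLeast0LessThan)

lemma set_all_bags: "set (all_bags m M) = set_mset (bags_mset m M)"
  by (metis mset_all_bags set_mset_mset)

lemma bags_mset_split:
  assumes "i < m"
  shows "bags_mset m M = mset (M i) + (\<Sum>i'\<in>{..<m} - {i}. mset (M i'))"
  unfolding bags_mset_def using assms by (simp add: sum.remove)

lemma mset_subseteq_bags_mset: "i < m \<Longrightarrow> mset (M i) \<subseteq># bags_mset m M"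
  using bags_mset_split by simp

lemma bags_mset_fun_upd:
  assumes "i < m"
  shows "bags_mset m (M(i := xs)) + mset (M i) = bags_mset m M + mset xs"
proof -
  have "(\<Sum>i'\<in>{..<m} - {i}. mset ((M(i := xs)) i')) = (\<Sum>i'\<in>{..<m} - {i}. mset (M i'))"
    by (intro sum.cong) auto
  then show ?thesis
    using bags_mset_split[OF assms, of M] bags_mset_split[OF assms, of "M(i := xs)"] by simp
qed

definition balanced :: "(nat \<Rightarrow> real) \<Rightarrow> nat set list \<Rightarrow> bool" where
  "balanced p bs \<longleftrightarrow> (\<exists>F. \<forall>X\<in>set bs. F \<le> pb p X \<and> (2 \<le> card X \<longrightarrow> pb p X \<le> 2 * F))"

lemma balanced_subset: "balanced p bs \<Longrightarrow> set bs' \<subseteq> set bs \<Longrightarrow> balanced p bs'"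
  unfolding balanced_def by blast

lemma balanced_loads_gt:
  assumes "balanced p bs" "X \<in> set bs" "2 \<le> card X" "4 * \<mu> < pb p X"
  shows "\<forall>Y\<in>set bs. 2 * \<mu> < pb p Y"
proof -
  obtain F where F: "\<forall>Y\<in>set bs. F \<le> pb p Y \<and> (2 \<le> card Y \<longrightarrow> pb p Y \<le> 2 * F)"
    using assms(1) unfolding balanced_def by blast
  then have "2 * \<mu> < F"
    using assms(2-4) by fastforce
  with F show ?thesis
    by fastforce
qed

lemma lpt_balanced_imp_balanced:
  assumes "lpt_balanced p bs"
  shows "balanced p bs"
proof (cases "bs = []")
  case False
  define F where "F = Min (pb p ` set bs)"
  have "F \<in> pb p ` set bs"
    unfolding F_def using False by (intro Min_in) auto
  then obtain Y where "Y \<in> set bs" "pb p Y = F"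
    by blast
  moreover have "\<forall>X\<in>set bs. F \<le> pb p X"
    unfolding F_def by simp
  ultimately have "\<forall>X\<in>set bs. F \<le> pb p X \<and> (2 \<le> card X \<longrightarrow> pb p X \<le> 2 * F)"
    using assms unfolding lpt_balanced_def by metis
  then show ?thesis
    unfolding balanced_def by blast
qed (simp add: balanced_def)

definition min_load :: "(nat \<Rightarrow> real) \<Rightarrow> nat \<Rightarrow> (nat \<Rightarrow> nat set list) \<Rightarrow> real" where
  "min_load p m M = Min (pb p ` set (all_bags m M))"

definition settled :: "real \<Rightarrow> (nat \<Rightarrow> real) \<Rightarrow> nat \<Rightarrow> (nat \<Rightarrow> nat set list) \<Rightarrow> nat \<Rightarrow> bool" where
  "settled rho p m M i \<longleftrightarrow> (\<forall>X\<in>set (M i). 2 \<le> card X \<longrightarrow> pb p X \<le> rho * min_load p m M)"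

definition potential :: "real \<Rightarrow> (nat \<Rightarrow> real) \<Rightarrow> nat \<Rightarrow> (nat \<Rightarrow> nat set list) \<Rightarrow> nat" where
  "potential rho p m M = (\<Sum>i<m. if settled rho p m M i then length (M i) else m)"

definition ipr_invariant :: "nat \<Rightarrow> (nat \<Rightarrow> real) \<Rightarrow> nat \<Rightarrow> (nat \<Rightarrow> nat set list) \<Rightarrow> bool" where
  "ipr_invariant n p m M \<longleftrightarrow>
     size (bags_mset m M) = m \<and> (\<forall>X\<in>#bags_mset m M. X \<subseteq> {..<n}) \<and>
     disjoint_mset (bags_mset m M) \<and> (\<forall>i<m. balanced p (M i))"

lemma length_le_if_ipr_invariant:
  assumes "ipr_invariant n p m M" "i < m"
  shows "length (M i) \<le> m"
  using assms mset_subseteq_bags_mset[of i m M] size_mset_mono unfolding ipr_invariant_def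
  by fastforce

lemma potential_le_if_ipr_invariant:
  assumes "ipr_invariant n p m M"
  shows "potential rho p m M \<le> m * m"
proof -
  have "potential rho p m M \<le> (\<Sum>i<m. m)"
    unfolding potential_def using length_le_if_ipr_invariant[OF assms] by (intro sum_mono) auto
  then show ?thesis
    by simp
qed

lemma ipr_invariant_initial:
  assumes "ipr_partition n p m s eps B" and nonneg: "\<forall>j<n. 0 \<le> p j"
  shows "ipr_invariant n p m (\<lambda>i. [B i])"
proof -
  have disj: "\<forall>i<m. \<forall>i'<m. i \<noteq> i' \<longrightarrow> B i \<inter> B i' = {}" and cover: "(\<Union>i<m. B i) = {..<n}"
    using assms unfolding ipr_partition_def by auto
  have bags: "bags_mset m (\<lambda>i. [B i]) = (\<Sum>i<m. {#B i#})"
    unfolding bags_mset_def by simp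
  have "disjoint_mset (\<Sum>i<m'. {#B i#})" if "m' \<le> m" for m'
    using that
  proof (induction m')
    case (Suc m')
    then show ?case
      using disj by (fastforce simp: disjoint_mset_add_mset add.commute[of _ "{#B m'#}"] set_mset_sum)
  qed (simp add: disjoint_mset_def)
  moreover have "balanced p [B i]" if "i < m" for i
  proof -
    have "0 \<le> pb p (B i)"
      unfolding pb_def using that cover nonneg by (intro sum_nonneg) auto
    then show ?thesis
      unfolding balanced_def by (intro exI[of _ "pb p (B i)"]) simp
  qed
  ultimately show ?thesis
    unfolding ipr_invariant_def bags using cover by (auto simp: size_multiset_sum set_mset_sum)
qed

lemma min_load_le:
  "X \<in># bags_mset m M \<Longrightarrow> min_load p m M \<le> pb p X"
  unfolding min_load_def set_all_bags by simp

lemma lpt_rebalance_decompose: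
  assumes inv: "ipr_invariant n p m M" and nonneg: "\<forall>j<n. 0 \<le> p j" and rho: "4 \<le> rho"
    and cond: "loop_cond rho p m M" and step: "lpt_rebalance p m M M'"
  obtains imin imax b rest res where
    "imin < m" "imax < m" "imin \<noteq> imax"
    "mset (M imin) = add_mset b (mset rest)" "pb p b = min_load p m M"
    "\<forall>Y\<in>set (M imax). 2 * min_load p m M \<le> pb p Y" "\<not> settled rho p m M imax"
    "lpt p (\<Union>(set (M imax @ [b]))) (length (M imax @ [b])) res"
    "M' = M(imin := rest, imax := res)"
proof -
  define \<mu> where "\<mu> = min_load p m M"
  obtain imin a imax res Bx where
    imin: "imin < m" and a: "a < length (M imin)" and
    least: "\<forall>B\<in>set (all_bags m M). pb p (M imin ! a) \<le> pb p B" and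
    imax: "imax < m" and Bx: "Bx \<in> set (M imax)" "2 \<le> card Bx" and
    largest: "\<forall>B\<in>set (all_bags m M). 2 \<le> card B \<longrightarrow> pb p B \<le> pb p Bx" and
    lpt: "lpt p (\<Union>(set ((M(imin := take a (M imin) @ drop (Suc a) (M imin))) imax @ [M imin ! a])))
           (length ((M(imin := take a (M imin) @ drop (Suc a) (M imin))) imax @ [M imin ! a])) res" and
    M': "M' = M(imin := take a (M imin) @ drop (Suc a) (M imin), imax := res)"
    using step unfolding lpt_rebalance_def Let_def by blast
  define b where "b = M imin ! a"
  define rest where "rest = take a (M imin) @ drop (Suc a) (M imin)"
  have b_in: "b \<in> set (M imin)"
    using a b_def by simp
  then have "b \<in># bags_mset m M"
    using mset_subseteq_bags_mset[OF imin] by (metis mset_subset_eqD set_mset_mset)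
  then have b_least: "pb p b = \<mu>" and b_sub: "b \<subseteq> {..<n}"
    using least inv unfolding \<mu>_def min_load_def b_def set_all_bags ipr_invariant_def
    by (auto intro!: Min_eqI[symmetric])
  have \<mu>_nonneg: "0 \<le> \<mu>"
    using b_least b_sub nonneg unfolding pb_def by (metis lessThan_iff subsetD sum_nonneg)
  obtain B0 where "B0 \<in> set (all_bags m M)" "2 \<le> card B0" "rho * \<mu> < pb p B0"
    using cond unfolding loop_cond_def \<mu>_def min_load_def by blast
  then have Bx_large: "rho * \<mu> < pb p Bx"
    using largest by fastforce
  then have not_settled: "\<not> settled rho p m M imax"
    using Bx unfolding settled_def \<mu>_def by fastforce
  have "4 * \<mu> \<le> rho * \<mu>"
    using rho \<mu>_nonneg by (simp add: mult_right_mono)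
  then have imax_large: "\<forall>Y\<in>set (M imax). 2 * \<mu> < pb p Y"
    using balanced_loads_gt[of p "M imax" Bx \<mu>] inv imax Bx Bx_large
    unfolding ipr_invariant_def by fastforce
  have "imin \<noteq> imax"
    using imax_large b_in b_least \<mu>_nonneg by force
  moreover have "mset (M imin) = add_mset b (mset rest)"
    using id_take_nth_drop[OF a] unfolding b_def rest_def
    by (metis mset.simps(2) mset_append union_mset_add_mset_right)
  ultimately show ?thesis
    using that[of imin imax b rest res] imin imax b_least imax_large not_settled lpt M'
    unfolding \<mu>_def b_def rest_def by (simp add: less_imp_le)
qed

locale ipr_iteration =
  fixes n m :: nat and p :: "nat \<Rightarrow> real" and rho :: real
    and M M' :: "nat \<Rightarrow> nat set list" and imin imax :: nat and b :: "nat set"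
    and rest res :: "nat set list"
  assumes invariant: "ipr_invariant n p m M" and nonneg: "\<forall>j<n. 0 \<le> p j" and rho: "4 \<le> rho"
    and imin: "imin < m" and imax: "imax < m" and machines_distinct: "imin \<noteq> imax"
    and imin_split: "mset (M imin) = add_mset b (mset rest)"
    and b_least: "pb p b = min_load p m M"
    and imax_large: "\<forall>Y\<in>set (M imax). 2 * min_load p m M \<le> pb p Y"
    and imax_unsettled: "\<not> settled rho p m M imax"
    and lpt: "lpt p (\<Union>(set (M imax @ [b]))) (length (M imax @ [b])) res"
    and M': "M' = M(imin := rest, imax := res)"
begin

lemma bags_mset_decompose:
  obtains R where "bags_mset m M = R + mset (M imax @ [b])" "bags_mset m M' = R + mset res"
proof -
  have "bags_mset m M' + mset (M imax) = bags_mset m (M(imin := rest)) + mset res"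
    using bags_mset_fun_upd[OF imax, of "M(imin := rest)" res] machines_distinct M' by simp
  moreover have "bags_mset m (M(imin := rest)) + mset (M imin) = bags_mset m M + mset rest"
    by (rule bags_mset_fun_upd[OF imin])
  ultimately have "bags_mset m M' + mset (M imax @ [b]) + mset rest = bags_mset m M + mset res + mset rest"
    using imin_split by (simp add: algebra_simps)
  then have exchange: "bags_mset m M' + mset (M imax @ [b]) = bags_mset m M + mset res"
    by simp
  define R where "R = bags_mset m M' - mset res"
  have "mset res \<subseteq># bags_mset m M'"
    using mset_subseteq_bags_mset[OF imax, of M'] M' by simp
  then have "bags_mset m M' = R + mset res"
    unfolding R_def by simp
  moreover from this have "bags_mset m M = R + mset (M imax @ [b])"
    using exchange by (simp add: algebra_simps)
  ultimately show ?thesis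
    using that by blast
qed

lemma pooled_bags_disjoint: "disjoint_mset (mset (M imax @ [b]))"
  using invariant bags_mset_decompose unfolding ipr_invariant_def by (metis disjoint_mset_union)

lemma pooled_bags_subset: "\<forall>Y\<in>set (M imax @ [b]). Y \<subseteq> {..<n}"
  using invariant bags_mset_decompose unfolding ipr_invariant_def by (metis set_mset_mset union_iff)

lemma pooled_bags_finite: "\<forall>Y\<in>set (M imax @ [b]). finite Y"
  using pooled_bags_subset finite_subset by blast

lemma pooled_jobs_nonneg: "\<forall>j\<in>\<Union>(set (M imax @ [b])). 0 \<le> p j"
  using pooled_bags_subset nonneg by blast

lemma rest_subset: "set rest \<subseteq> set (M imin)"
  using imin_split by (metis set_mset_add_mset_insert set_mset_mset subset_insertI)

lemma min_load_nonneg: "0 \<le> min_load p m M"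
  using pooled_jobs_nonneg b_least unfolding pb_def by (metis UnionI in_set_conv_decomp sum_nonneg)

lemma res_load_ge: "X \<in> set res \<Longrightarrow> min_load p m M \<le> pb p X"
  using lpt_load_lower_bound[OF lpt pooled_bags_disjoint pooled_bags_finite pooled_jobs_nonneg]
    b_least imax_large
  by simp

lemma min_load_mono: "min_load p m M \<le> min_load p m M'"
proof -
  obtain R where R: "bags_mset m M = R + mset (M imax @ [b])" "bags_mset m M' = R + mset res"
    by (rule bags_mset_decompose)
  have "res \<noteq> []"
    using lpt_length[OF lpt] by auto
  moreover have "min_load p m M \<le> pb p X" if "X \<in># R" for X
    using min_load_le[of X m M] R(1) that by simp
  ultimately show ?thesis
    unfolding min_load_def[of p m M'] set_all_bags R(2) using res_load_ge
    by (subst Min_ge_iff) auto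
qed

lemma ipr_invariant_next: "ipr_invariant n p m M'"
proof -
  obtain R where R: "bags_mset m M = R + mset (M imax @ [b])" "bags_mset m M' = R + mset res"
    by (rule bags_mset_decompose)
  have res_Union: "\<Union>(set res) = \<Union>(set (M imax @ [b]))"
    using lpt_Union[OF lpt] .
  have "size (bags_mset m M') = m"
    using invariant R lpt_length[OF lpt] unfolding ipr_invariant_def by simp
  moreover have "\<forall>X\<in>#bags_mset m M'. X \<subseteq> {..<n}"
    using invariant R res_Union pooled_bags_subset unfolding ipr_invariant_def by auto
  moreover have "disjoint_mset (bags_mset m M')"
    using invariant R disjoint_mset_replace[of R "mset (M imax @ [b])" "mset res"]
      lpt_disjoint[OF lpt] res_Union
    unfolding ipr_invariant_def by simp
  moreover have "balanced p (M' i)" if "i < m" for i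
    using invariant that lpt_balanced_imp_balanced[OF lpt_balanced_lpt[OF lpt pooled_jobs_nonneg]]
      balanced_subset[OF _ rest_subset] imin
    unfolding M' ipr_invariant_def by auto
  ultimately show ?thesis
    unfolding ipr_invariant_def by blast
qed

lemma potential_less: "potential rho p m M' < potential rho p m M"
proof -
  define f where "f N i = (if settled rho p m N i then length (N i) else m)" for N i
  have "settled rho p m M' imin"
  proof -
    obtain F where F: "\<forall>Y\<in>set (M imin). F \<le> pb p Y \<and> (2 \<le> card Y \<longrightarrow> pb p Y \<le> 2 * F)"
      using invariant imin unfolding ipr_invariant_def balanced_def by blast
    have "b \<in> set (M imin)"
      using imin_split by (metis set_mset_mset union_single_eq_member)
    then have "F \<le> min_load p m M"
      using F b_least by force
    moreover have "4 * min_load p m M \<le> rho * min_load p m M'"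
      using min_load_nonneg min_load_mono rho by (intro mult_mono) auto
    ultimately have "2 * F \<le> rho * min_load p m M'"
      using min_load_nonneg by linarith
    then show ?thesis
      using F rest_subset machines_distinct unfolding settled_def M' by auto
  qed
  then have imin_less: "f M' imin < f M imin"
    using imin_split length_le_if_ipr_invariant[OF invariant imin] machines_distinct
    unfolding f_def M' by (auto simp flip: size_mset)
  have "f M' i \<le> f M i" if "i < m" for i
  proof (cases "settled rho p m M i \<and> i \<noteq> imin")
    case True
    then have "M' i = M i"
      using imax_unsettled unfolding M' by auto
    moreover have "rho * min_load p m M \<le> rho * min_load p m M'"
      using min_load_mono rho by (intro mult_left_mono) auto
    ultimately have "settled rho p m M' i"
      using True unfolding settled_def by fastforce
    then show ?thesis
      using True \<open>M' i = M i\<close> unfolding f_def by simp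
  next
    case False
    then show ?thesis
      using imin_less length_le_if_ipr_invariant[OF ipr_invariant_next that] unfolding f_def by auto
  qed
  then have "(\<Sum>i<m. f M' i) < (\<Sum>i<m. f M i)"
    using imin imin_less by (intro sum_strict_mono_ex1) auto
  then show ?thesis
    unfolding potential_def f_def .
qed

end

lemma ipr_iteration_step:
  assumes "ipr_invariant n p m M" "\<forall>j<n. 0 \<le> p j" "4 \<le> rho"
    and "loop_cond rho p m M" "lpt_rebalance p m M M'"
  shows "ipr_invariant n p m M' \<and> potential rho p m M' < potential rho p m M"
proof -
  obtain imin imax b rest res where "ipr_iteration n m p rho M M' imin imax b rest res"
    using lpt_rebalance_decompose[OF assms] assms(1-3) by (metis ipr_iteration.intro)
  then interpret ipr_iteration n m p rho M M' imin imax b rest res .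
  show ?thesis
    using ipr_invariant_next potential_less by blast
qed

lemma ipr_iterations_le_square:
  assumes rho: "4 \<le> rho" and nonneg: "\<forall>j<n. 0 \<le> p j"
    and partition: "ipr_partition n p m s eps B" and runs: "ipr_runs_iterations rho alpha p s m B k"
  shows "k \<le> m^2"
proof -
  obtain M :: "nat \<Rightarrow> nat \<Rightarrow> nat set list" where M0: "M 0 = (\<lambda>i. [B i])"
    and run: "\<forall>t<k. loop_cond rho p m (M t) \<and> lpt_rebalance p m (M t) (M (Suc t))"
    using runs unfolding ipr_runs_iterations_def by blast
  have "ipr_invariant n p m (M t) \<and> potential rho p m (M t) + t \<le> potential rho p m (M 0)"
    if "t \<le> k" for t
    using that
  proof (induction t)
    case 0
    then show ?case
      using ipr_invariant_initial[OF partition nonneg] M0 by simp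
  next
    case (Suc t)
    then show ?case
      using ipr_iteration_step[of n p m "M t" rho "M (Suc t)"] nonneg rho run by fastforce
  qed
  then have "k \<le> potential rho p m (M 0)"
    by fastforce
  also have "\<dots> \<le> m * m"
    using potential_le_if_ipr_invariant ipr_invariant_initial[OF partition nonneg] M0 by simp
  finally show ?thesis
    by (simp add: power2_eq_square)
qed

theorem lemma9:
  shows "\<exists>C::nat. \<forall>n m (p::nat \<Rightarrow> real) (s::nat \<Rightarrow> real) (alpha::real) (eps::real)
            (B::nat \<Rightarrow> nat set) (k::nat).
     1 \<le> m \<longrightarrow>
     (\<forall>j<n. 0 \<le> p j) \<longrightarrow>
     (\<forall>i<m. 0 < s i) \<longrightarrow>
     (\<forall>i i'. i \<le> i' \<and> i' < m \<longrightarrow> s i' \<le> s i) \<longrightarrow>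
     0 < alpha \<and> alpha < 1 \<longrightarrow>
     0 < eps \<and> eps < 1 \<longrightarrow>
     ipr_partition n p m s eps B \<longrightarrow>
     ipr_runs_iterations 4 alpha p s m B k \<longrightarrow>
     k \<le> C * m^2"
  using ipr_iterations_le_square[of 4] by (intro exI[of _ 1]) simp

end
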